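(* Let $k$ be a field, $\Gamma=(V,E)$ a finite connected quiver, $I\subseteq R^2$ a two-sided ideal of $k\Gamma$, and let $q$ be a path with $h(q)=t(q)=v_0$. Then $$D_{\overline{q}}=\sum_{p\in E,\ t(p)=v_0}D_{p,\overline{qp}}-\sum_{r\in E,\ h(r)=v_0}D_{r,\overline{rq}}.$$
   Context: For a path $p$, $t(p),h(p)$ are its start and end vertex; paths multiply by left-to-right concatenation (product $0$ if they do not concatenate). $R$ is the ideal generated by $E$ and $\overline{x}=x+I$. A differential operator from $k\Gamma$ to $k\Gamma/I$ is a $k$-linear map $D$ with $D(xy)=D(x)\overline{y}+\overline{x}D(y)$. For $m\in k\Gamma/I$, $D_m$ denotes the differential operator $x\mapsto m\overline{x}-\overline{x}m$. For an arrow $r$ and a path $s$ with the same start and end vertices as $r$, $D_{r,\overline{s}}$ is the unique differential operator $k\Gamma\to k\Gamma/I$ with $D_{r,\overline{s}}(r)=\overline{s}$ and vanishing on all other arrows and all vertices. *)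

theory Defs
  imports Main
begin

text \<open>Quiver Gamma = (V, E) with start map t and end map h on arrows.
  A path is a pair (v, es): start vertex v and a (possibly empty) list of arrows,
  composed left to right. (v, []) is the trivial path at v.
  Elements of k Gamma / I are represented by representatives in k Gamma; equality in the
  quotient is congruence modulo I.\<close>

type_synonym ('v, 'e) qpath = "'v \<times> 'e list"
type_synonym ('v, 'e, 'k) pelt = "('v, 'e) qpath \<Rightarrow> 'k"

definition is_qpath :: "'v set \<Rightarrow> 'e set \<Rightarrow> ('e \<Rightarrow> 'v) \<Rightarrow> ('e \<Rightarrow> 'v) \<Rightarrow> ('v, 'e) qpath \<Rightarrow> bool" where
  "is_qpath V E t h p \<longleftrightarrow> fst p \<in> V \<and> set (snd p) \<subseteq> E \<and>
     (snd p \<noteq> [] \<longrightarrow> t (hd (snd p)) = fst p) \<and>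
     (\<forall>i. Suc i < length (snd p) \<longrightarrow> h (snd p ! i) = t (snd p ! Suc i))"

definition pend :: "('e \<Rightarrow> 'v) \<Rightarrow> ('v, 'e) qpath \<Rightarrow> 'v" where
  "pend h p = (if snd p = [] then fst p else h (last (snd p)))"

definition pcat :: "('v, 'e) qpath \<Rightarrow> ('v, 'e) qpath \<Rightarrow> ('v, 'e) qpath" where
  "pcat p q = (fst p, snd p @ snd q)"

definition path_alg :: "'v set \<Rightarrow> 'e set \<Rightarrow> ('e \<Rightarrow> 'v) \<Rightarrow> ('e \<Rightarrow> 'v) \<Rightarrow> ('v, 'e, 'k::zero) pelt set" where
  "path_alg V E t h = {x. finite {p. x p \<noteq> 0} \<and> (\<forall>p. x p \<noteq> 0 \<longrightarrow> is_qpath V E t h p)}"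

definition bas :: "('v, 'e) qpath \<Rightarrow> ('v, 'e, 'k::{zero,one}) pelt" where
  "bas p = (\<lambda>q. if q = p then 1 else 0)"

definition smul :: "'k::times \<Rightarrow> ('v, 'e, 'k) pelt \<Rightarrow> ('v, 'e, 'k) pelt" where
  "smul c x = (\<lambda>p. c * x p)"

definition pmult :: "('e \<Rightarrow> 'v) \<Rightarrow> ('v, 'e, 'k::comm_ring_1) pelt \<Rightarrow> ('v, 'e, 'k) pelt \<Rightarrow> ('v, 'e, 'k) pelt" where
  "pmult h x y = (\<lambda>p. \<Sum>i\<in>{0..length (snd p)}.
      x (fst p, take i (snd p)) * y (pend h (fst p, take i (snd p)), drop i (snd p)))"

definition is_ideal :: "'v set \<Rightarrow> 'e set \<Rightarrow> ('e \<Rightarrow> 'v) \<Rightarrow> ('e \<Rightarrow> 'v) \<Rightarrow> ('v, 'e, 'k::comm_ring_1) pelt set \<Rightarrow> bool" where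
  "is_ideal V E t h J \<longleftrightarrow> J \<subseteq> path_alg V E t h \<and> (\<lambda>_. 0) \<in> J \<and>
     (\<forall>x\<in>J. \<forall>y\<in>J. (\<lambda>p. x p + y p) \<in> J) \<and>
     (\<forall>c x. x \<in> J \<longrightarrow> smul c x \<in> J) \<and>
     (\<forall>a\<in>path_alg V E t h. \<forall>x\<in>J. pmult h a x \<in> J \<and> pmult h x a \<in> J)"

definition ideal_gen :: "'v set \<Rightarrow> 'e set \<Rightarrow> ('e \<Rightarrow> 'v) \<Rightarrow> ('e \<Rightarrow> 'v) \<Rightarrow> ('v, 'e, 'k::comm_ring_1) pelt set \<Rightarrow> ('v, 'e, 'k) pelt set" where
  "ideal_gen V E t h S = \<Inter>{J. is_ideal V E t h J \<and> S \<subseteq> J}"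

definition arrow_ideal :: "'v set \<Rightarrow> 'e set \<Rightarrow> ('e \<Rightarrow> 'v) \<Rightarrow> ('e \<Rightarrow> 'v) \<Rightarrow> ('v, 'e, 'k::comm_ring_1) pelt set" where
  "arrow_ideal V E t h = ideal_gen V E t h {bas (t a, [a]) | a. a \<in> E}"

definition arrow_ideal_sq :: "'v set \<Rightarrow> 'e set \<Rightarrow> ('e \<Rightarrow> 'v) \<Rightarrow> ('e \<Rightarrow> 'v) \<Rightarrow> ('v, 'e, 'k::comm_ring_1) pelt set" where
  "arrow_ideal_sq V E t h = ideal_gen V E t h
     {pmult h x y | x y. x \<in> arrow_ideal V E t h \<and> y \<in> arrow_ideal V E t h}"

definition congI :: "('v, 'e, 'k::ab_group_add) pelt set \<Rightarrow> ('v, 'e, 'k) pelt \<Rightarrow> ('v, 'e, 'k) pelt \<Rightarrow> bool" where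
  "congI I x y \<longleftrightarrow> (\<lambda>p. x p - y p) \<in> I"

definition is_diffop :: "'v set \<Rightarrow> 'e set \<Rightarrow> ('e \<Rightarrow> 'v) \<Rightarrow> ('e \<Rightarrow> 'v) \<Rightarrow> ('v, 'e, 'k::comm_ring_1) pelt set
     \<Rightarrow> (('v, 'e, 'k) pelt \<Rightarrow> ('v, 'e, 'k) pelt) \<Rightarrow> bool" where
  "is_diffop V E t h I D \<longleftrightarrow>
     (\<forall>x\<in>path_alg V E t h. D x \<in> path_alg V E t h) \<and>
     (\<forall>x\<in>path_alg V E t h. \<forall>y\<in>path_alg V E t h.
        congI I (D (\<lambda>p. x p + y p)) (\<lambda>p. D x p + D y p)) \<and>
     (\<forall>c. \<forall>x\<in>path_alg V E t h. congI I (D (smul c x)) (smul c (D x))) \<and>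
     (\<forall>x\<in>path_alg V E t h. \<forall>y\<in>path_alg V E t h.
        congI I (D (pmult h x y)) (\<lambda>p. pmult h (D x) y p + pmult h x (D y) p))"

definition Dm :: "('e \<Rightarrow> 'v) \<Rightarrow> ('v, 'e, 'k::comm_ring_1) pelt \<Rightarrow> ('v, 'e, 'k) pelt \<Rightarrow> ('v, 'e, 'k) pelt" where
  "Dm h m = (\<lambda>x p. pmult h m x p - pmult h x m p)"

text \<open>D_{r, s-bar}: the (unique modulo I) differential operator sending r to s-bar and
  killing all other arrows and all vertices.\<close>
definition Drs :: "'v set \<Rightarrow> 'e set \<Rightarrow> ('e \<Rightarrow> 'v) \<Rightarrow> ('e \<Rightarrow> 'v) \<Rightarrow> ('v, 'e, 'k::comm_ring_1) pelt set
     \<Rightarrow> 'e \<Rightarrow> ('v, 'e) qpath \<Rightarrow> ('v, 'e, 'k) pelt \<Rightarrow> ('v, 'e, 'k) pelt" where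
  "Drs V E t h I r s = (SOME D. is_diffop V E t h I D \<and>
      congI I (D (bas (t r, [r]))) (bas s) \<and>
      (\<forall>a\<in>E. a \<noteq> r \<longrightarrow> congI I (D (bas (t a, [a]))) (\<lambda>_. 0)) \<and>
      (\<forall>v\<in>V. congI I (D (bas (v, []))) (\<lambda>_. 0)))"

definition quiver_connected :: "'v set \<Rightarrow> 'e set \<Rightarrow> ('e \<Rightarrow> 'v) \<Rightarrow> ('e \<Rightarrow> 'v) \<Rightarrow> bool" where
  "quiver_connected V E t h \<longleftrightarrow>
     (\<forall>u\<in>V. \<forall>w\<in>V. (u, w) \<in> ({(t a, h a) | a. a \<in> E} \<union> {(h a, t a) | a. a \<in> E})\<^sup>*)"

end

theory Submission
  imports Defs "HOL-Library.Function_Algebras"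
begin

text \<open>Both sides of the identity are differential operators k Gamma \<rightarrow> k Gamma / I, and such an
  operator is determined by its values on vertices and arrows, by the Leibniz rule and induction on
  the length of paths. On a vertex both sides vanish because q is a loop. On an arrow b the inner
  derivation gives q b - b q, and on the right exactly the terms D_{b,qb} (present iff t b = v0) and
  D_{b,bq} (present iff h b = v0) survive, with the same values. The operators D_{r,s} exist since
  replacing every occurrence of r by s is a derivation of k Gamma itself.\<close>

lemma sum_fun_apply: "(\<Sum>a\<in>A. f a) x = (\<Sum>a\<in>A. f a x)"
  by (induction A rule: infinite_finite_induct) auto

lemma sum_lessThan_add: "(\<Sum>i<m + n. g i) = (\<Sum>i<m. g i) + (\<Sum>i<n. g (m + i :: nat))"
  by (induction n) (simp_all add: add.assoc)

definition supp :: "('v,'e,'k::zero) pelt \<Rightarrow> ('v,'e) qpath set" where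
  "supp x = {p. x p \<noteq> 0}"

lemma supp_bas: "supp (bas w :: ('v,'e,'k::zero_neq_one) pelt) = {w}"
  by (auto simp: supp_def bas_def)

lemma supp_zero [simp]: "supp 0 = {}"
  by (simp add: supp_def)

lemma supp_add: "supp (x + y :: ('v,'e,'k::monoid_add) pelt) \<subseteq> supp x \<union> supp y"
  by (auto simp: supp_def)

lemma finite_supp_path_alg: "x \<in> path_alg V E t h \<Longrightarrow> finite (supp x)"
  by (simp add: path_alg_def supp_def)

lemma finite_supp_sum:
  "(\<And>j. j \<in> J \<Longrightarrow> finite (supp (f j :: ('v,'e,'k::comm_monoid_add) pelt))) \<Longrightarrow> finite (supp (\<Sum>j\<in>J. f j))"
proof (induction J rule: infinite_finite_induct)
  case (insert x F)
  then have "finite (supp (f x + sum f F))"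
    by (intro finite_subset[OF supp_add]) auto
  then show ?case by (simp only: sum.insert[OF insert(1,2)])
qed (auto simp: supp_def)

lemma finite_supp_smul: "finite (supp x) \<Longrightarrow> finite (supp (smul c x :: ('v,'e,'k::mult_zero) pelt))"
  by (rule finite_subset[of _ "supp x"]) (auto simp: supp_def smul_def)

lemma smul_apply [simp]: "smul c x p = c * x p"
  by (simp add: smul_def)

lemma bas_apply: "bas w p = (if p = w then 1 else 0)"
  by (simp add: bas_def)

lemma smul_zero_right [simp]: "smul c (0 :: ('v,'e,'k::comm_ring_1) pelt) = 0"
  by (rule ext) simp

lemma smul_add: "smul c (x + y) = smul c x + smul (c::'k::comm_ring_1) y"
  by (rule ext) (simp add: algebra_simps)

lemma smul_diff: "smul c (x - y) = smul c x - smul (c::'k::comm_ring_1) y"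
  by (rule ext) (simp add: algebra_simps)

lemma smul_sum: "smul c (\<Sum>j\<in>J. f j) = (\<Sum>j\<in>J. smul (c::'k::comm_ring_1) (f j))"
  by (rule ext) (simp add: sum_fun_apply sum_distrib_left)

lemma smul_add_left: "smul (a + b) x = smul a x + smul (b::'k::comm_ring_1) x"
  by (rule ext) (simp add: algebra_simps)

lemma smul_smul: "smul a (smul b x) = smul (a * b) (x :: ('v,'e,'k::comm_ring_1) pelt)"
  by (rule ext) (simp add: algebra_simps)

lemma pelt_expansion:
  fixes x :: "('v,'e,'k::comm_ring_1) pelt"
  assumes "finite F" "supp x \<subseteq> F"
  shows "x = (\<Sum>w\<in>F. smul (x w) (bas w))"
proof (rule ext)
  fix z
  have "(\<Sum>w\<in>F. smul (x w) (bas w)) z = (\<Sum>w\<in>F. if w = z then x z else 0)"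
    by (auto simp: sum_fun_apply bas_apply intro: sum.cong)
  also have "\<dots> = x z"
    using assms by (auto simp: supp_def)
  finally show "x z = (\<Sum>w\<in>F. smul (x w) (bas w)) z" by simp
qed

lemma pmult_add_left: "pmult h (x + y) z = pmult h x z + pmult h y z"
  by (rule ext) (simp add: pmult_def sum.distrib algebra_simps)

lemma pmult_add_right: "pmult h z (x + y) = pmult h z x + pmult h z y"
  by (rule ext) (simp add: pmult_def sum.distrib algebra_simps)

lemma pmult_diff_left: "pmult h (x - y) z = pmult h x z - pmult h y z"
  by (rule ext) (simp add: pmult_def sum_subtractf algebra_simps)

lemma pmult_diff_right: "pmult h z (x - y) = pmult h z x - pmult h z y"
  by (rule ext) (simp add: pmult_def sum_subtractf algebra_simps)

lemma pmult_smul_left: "pmult h (smul c x) z = smul c (pmult h x z)"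
  by (rule ext) (simp add: pmult_def sum_distrib_left algebra_simps)

lemma pmult_smul_right: "pmult h z (smul c x) = smul c (pmult h z x)"
  by (rule ext) (simp add: pmult_def sum_distrib_left algebra_simps)

lemma pmult_zero_left [simp]: "pmult h 0 z = 0"
  by (rule ext) (simp add: pmult_def)

lemma pmult_zero_right [simp]: "pmult h z 0 = 0"
  by (rule ext) (simp add: pmult_def)

lemma pmult_sum_left: "pmult h (\<Sum>j\<in>J. f j) z = (\<Sum>j\<in>J. pmult h (f j) z)"
proof (induction J rule: infinite_finite_induct)
  case (insert x F)
  then show ?case by (simp only: sum.insert[OF insert(1,2)] pmult_add_left)
qed (simp_all only: sum.infinite sum.empty pmult_zero_left not_False_eq_True)

lemma pmult_sum_right: "pmult h z (\<Sum>j\<in>J. f j) = (\<Sum>j\<in>J. pmult h z (f j))"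
proof (induction J rule: infinite_finite_induct)
  case (insert x F)
  then show ?case by (simp only: sum.insert[OF insert(1,2)] pmult_add_right)
qed (simp_all only: sum.infinite sum.empty pmult_zero_right not_False_eq_True)

lemma pmult_if_left: "pmult h (if c then x else 0) z = (if c then pmult h x z else 0)"
  by simp

lemma pmult_if_right: "pmult h z (if c then x else 0) = (if c then pmult h z x else 0)"
  by simp

lemma pmult_smul_sum:
  fixes f g :: "_ \<Rightarrow> ('v,'e,'k::comm_ring_1) pelt"
  shows "pmult h (\<Sum>w\<in>A. smul (a w) (f w)) (\<Sum>w'\<in>B. smul (b w') (g w'))
    = (\<Sum>w\<in>A. \<Sum>w'\<in>B. smul (a w * b w') (pmult h (f w) (g w')))"
  by (simp only: pmult_sum_left pmult_sum_right pmult_smul_left pmult_smul_right smul_sum smul_smul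
      mult.commute[of "b _" "a _"]) (rule sum.swap)

lemma pmult_bas:
  "pmult h (bas p) (bas p') = (if pend h p = fst p' then bas (pcat p p') else (0 :: ('v,'e,'k::comm_ring_1) pelt))"
  (is "?L = ?R")
proof (rule ext)
  fix z
  have split_eq: "bas p (fst z, take i (snd z)) * bas p' (pend h (fst z, take i (snd z)), drop i (snd z))
      = (of_bool (i = length (snd p) \<and> z = pcat p p' \<and> pend h p = fst p') :: 'k)"
    if "i \<le> length (snd z)" for i
  proof -
    have "((fst z, take i (snd z)) = p \<and> (pend h (fst z, take i (snd z)), drop i (snd z)) = p')
        \<longleftrightarrow> i = length (snd p) \<and> z = pcat p p' \<and> pend h p = fst p'"
      using that by (cases z; cases p; cases p') (auto simp: pcat_def)
    then show ?thesis by (auto simp: bas_apply)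
  qed
  have "pmult h (bas p) (bas p') z
      = (\<Sum>i\<in>{0..length (snd z)}. of_bool (i = length (snd p) \<and> z = pcat p p' \<and> pend h p = fst p') :: 'k)"
    unfolding pmult_def by (rule sum.cong[OF refl], rule split_eq) simp
  also have "\<dots> = of_bool (z = pcat p p' \<and> pend h p = fst p')"
    by (auto simp: pcat_def)
  also have "\<dots> = ?R z"
    by (auto simp: bas_apply)
  finally show "?L z = ?R z" .
qed

lemma pend_pcat: "pend h p = fst p' \<Longrightarrow> pend h (pcat p p') = pend h p'"
  by (auto simp: pend_def pcat_def)

lemma pmult_bas_assoc:
  "pmult h (pmult h (bas p1) (bas p2)) (bas p3) = pmult h (bas p1) (pmult h (bas p2) (bas p3))"
proof (cases "pend h p1 = fst p2")
  case True
  have "fst (pcat p2 p3) = fst p2" "pcat (pcat p1 p2) p3 = pcat p1 (pcat p2 p3)"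
    by (simp_all add: pcat_def)
  with True show ?thesis
    by (simp only: pmult_bas pmult_if_left pmult_if_right pend_pcat if_True) simp
next
  case False
  have "fst (pcat p2 p3) = fst p2"
    by (simp add: pcat_def)
  with False show ?thesis
    by (simp only: pmult_bas pmult_if_left pmult_if_right if_False pmult_zero_left if_cancel)
qed

lemma is_qpath_Cons:
  assumes "\<forall>a\<in>E. h a \<in> V"
  shows "is_qpath V E t h (v, a # l) \<longleftrightarrow> v \<in> V \<and> a \<in> E \<and> t a = v \<and> is_qpath V E t h (h a, l)"
proof
  assume "is_qpath V E t h (v, a # l)"
  then have basic: "v \<in> V" "a \<in> E" "t a = v" "set l \<subseteq> E"
    and chain: "\<forall>i. Suc i < Suc (length l) \<longrightarrow> h ((a # l) ! i) = t ((a # l) ! Suc i)"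
    by (auto simp: is_qpath_def)
  have "l \<noteq> [] \<longrightarrow> t (hd l) = h a"
    using chain[rule_format, of 0] by (cases l) auto
  moreover have "\<forall>i. Suc i < length l \<longrightarrow> h (l ! i) = t (l ! Suc i)"
    using chain by (metis Suc_less_eq nth_Cons_Suc)
  ultimately show "v \<in> V \<and> a \<in> E \<and> t a = v \<and> is_qpath V E t h (h a, l)"
    using basic assms by (auto simp: is_qpath_def)
next
  assume "v \<in> V \<and> a \<in> E \<and> t a = v \<and> is_qpath V E t h (h a, l)"
  then have basic: "v \<in> V" "a \<in> E" "t a = v" "set l \<subseteq> E"
    and chain: "\<forall>i. Suc i < length l \<longrightarrow> h (l ! i) = t (l ! Suc i)"
    and head: "l \<noteq> [] \<longrightarrow> t (hd l) = h a"
    by (auto simp: is_qpath_def)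
  have "\<forall>i. Suc i < length (a # l) \<longrightarrow> h ((a # l) ! i) = t ((a # l) ! Suc i)"
  proof (intro allI impI)
    fix i assume "Suc i < length (a # l)"
    then show "h ((a # l) ! i) = t ((a # l) ! Suc i)"
      using chain head by (cases i) (auto simp: hd_conv_nth)
  qed
  then show "is_qpath V E t h (v, a # l)"
    using basic by (auto simp: is_qpath_def)
qed

lemma is_qpath_append:
  assumes "\<forall>a\<in>E. h a \<in> V"
  shows "is_qpath V E t h (v, l1 @ l2) \<longleftrightarrow> is_qpath V E t h (v, l1) \<and> is_qpath V E t h (pend h (v, l1), l2)"
proof (induction l1 arbitrary: v)
  case Nil
  then show ?case by (auto simp: pend_def is_qpath_def)
next
  case (Cons a l1)
  have pend_Cons: "pend h (v, a # l1) = pend h (h a, l1)"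
    by (simp add: pend_def)
  show ?case
    unfolding append_Cons is_qpath_Cons[OF assms] Cons pend_Cons by auto
qed

lemma is_qpath_pcat:
  assumes "\<forall>a\<in>E. h a \<in> V" "is_qpath V E t h p" "is_qpath V E t h p'" "pend h p = fst p'"
  shows "is_qpath V E t h (pcat p p')"
proof -
  have "is_qpath V E t h (fst p, snd p)" "is_qpath V E t h (pend h (fst p, snd p), snd p')"
    using assms(2-4) by simp_all
  then have "is_qpath V E t h (fst p, snd p @ snd p')"
    using is_qpath_append[OF assms(1)] by blast
  then show ?thesis by (simp add: pcat_def)
qed

lemma is_qpath_arrow: "a \<in> E \<Longrightarrow> t a \<in> V \<Longrightarrow> is_qpath V E t h (t a, [a])"
  by (simp add: is_qpath_def)

lemma bas_in_path_alg: "is_qpath V E t h p \<Longrightarrow> (bas p :: ('v,'e,'k::comm_ring_1) pelt) \<in> path_alg V E t h"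
  by (simp add: path_alg_def bas_apply)

lemma smul_in_path_alg:
  fixes x :: "('v,'e,'k::comm_ring_1) pelt"
  assumes "x \<in> path_alg V E t h"
  shows "smul c x \<in> path_alg V E t h"
proof -
  have sub: "{p. smul c x p \<noteq> 0} \<subseteq> {p. x p \<noteq> 0}"
    by (rule Collect_mono) (metis smul_apply mult_zero_right)
  have fin: "finite {p. x p \<noteq> 0}" and paths: "\<And>p. x p \<noteq> 0 \<Longrightarrow> is_qpath V E t h p"
    using assms unfolding path_alg_def by auto
  show ?thesis
    unfolding path_alg_def mem_Collect_eq using finite_subset[OF sub fin] sub paths by blast
qed

section \<open>Substituting a path for an arrow\<close>

definition subst_at :: "('v,'e) qpath \<Rightarrow> ('v,'e) qpath \<Rightarrow> nat \<Rightarrow> ('v,'e) qpath" where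
  "subst_at s w i = (fst w, take i (snd w) @ snd s @ drop (Suc i) (snd w))"

definition subst_arrow_bas :: "'e \<Rightarrow> ('v,'e) qpath \<Rightarrow> ('v,'e) qpath \<Rightarrow> ('v,'e,'k::comm_ring_1) pelt" where
  "subst_arrow_bas r s w = (\<Sum>i<length (snd w). if snd w ! i = r then bas (subst_at s w i) else 0)"

text \<open>Replacing the occurrences of r by s, one at a time and summing, is a derivation of k Gamma
  itself, not only modulo I; it witnesses that the choice in Drs is possible.\<close>

definition subst_arrow :: "'e \<Rightarrow> ('v,'e) qpath \<Rightarrow> ('v,'e,'k::comm_ring_1) pelt \<Rightarrow> ('v,'e,'k) pelt" where
  "subst_arrow r s x = (\<Sum>w\<in>supp x. smul (x w) (subst_arrow_bas r s w))"

lemma finite_supp_subst_arrow_bas: "finite (supp (subst_arrow_bas r s w))"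
  unfolding subst_arrow_bas_def by (rule finite_supp_sum) (simp add: supp_bas)

lemma subst_arrow_eq_sum:
  assumes "finite F" "supp x \<subseteq> F"
  shows "subst_arrow r s x = (\<Sum>w\<in>F. smul (x w) (subst_arrow_bas r s w))"
  unfolding subst_arrow_def
  by (rule sum.mono_neutral_left) (use assms in \<open>auto simp: supp_def\<close>)

lemma subst_arrow_add:
  assumes "finite (supp x)" "finite (supp y)"
  shows "subst_arrow r s (x + y) = subst_arrow r s x + subst_arrow r s y"
proof -
  let ?F = "supp x \<union> supp y"
  have "subst_arrow r s (x + y) = (\<Sum>w\<in>?F. smul ((x + y) w) (subst_arrow_bas r s w))"
    by (rule subst_arrow_eq_sum) (use assms supp_add in auto)
  also have "\<dots> = subst_arrow r s x + subst_arrow r s y"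
    using assms by (simp add: smul_add_left sum.distrib subst_arrow_eq_sum[of ?F])
  finally show ?thesis .
qed

lemma subst_arrow_smul:
  assumes "finite (supp x)"
  shows "subst_arrow r s (smul c x) = smul c (subst_arrow r s x)"
proof -
  have "subst_arrow r s (smul c x) = (\<Sum>w\<in>supp x. smul (smul c x w) (subst_arrow_bas r s w))"
    by (rule subst_arrow_eq_sum) (use assms in \<open>auto simp: supp_def\<close>)
  then show ?thesis
    by (simp add: subst_arrow_def smul_sum smul_smul)
qed

lemma subst_arrow_bas_eq [simp]: "subst_arrow r s (bas w) = subst_arrow_bas r s w"
  by (simp add: subst_arrow_def supp_bas bas_apply smul_def)

lemma subst_arrow_sum:
  "(\<And>j. j \<in> J \<Longrightarrow> finite (supp (f j))) \<Longrightarrow> subst_arrow r s (\<Sum>j\<in>J. f j) = (\<Sum>j\<in>J. subst_arrow r s (f j))"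
proof (induction J rule: infinite_finite_induct)
  case (insert x F)
  then have "subst_arrow r s (f x + sum f F) = subst_arrow r s (f x) + subst_arrow r s (sum f F)"
    by (intro subst_arrow_add finite_supp_sum) auto
  then show ?case
    using insert by (simp only: sum.insert[OF insert(1,2)]) simp
qed (simp_all add: subst_arrow_def)

lemma pend_subst_at:
  assumes "snd s \<noteq> []" "pend h s = h r" "i < length (snd w)" "snd w ! i = r"
  shows "pend h (subst_at s w i) = pend h w"
proof (cases "drop (Suc i) (snd w) = []")
  case True
  then have "length (snd w) = Suc i"
    using assms(3) by simp
  then have "last (snd w) = r"
    using assms(4) by (subst last_conv_nth) auto
  then show ?thesis using assms True by (auto simp: subst_at_def pend_def)
next
  case False
  then show ?thesis using assms by (auto simp: subst_at_def pend_def)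
qed

lemma subst_arrow_pmult_bas:
  assumes "snd s \<noteq> []" "pend h s = h r"
  shows "(subst_arrow r s (pmult h (bas w) (bas w')) :: ('v,'e,'k::comm_ring_1) pelt)
      = pmult h (subst_arrow_bas r s w) (bas w') + pmult h (bas w) (subst_arrow_bas r s w')"
proof (cases "pend h w = fst w'")
  case True
  let ?ww = "pcat w w'"
  let ?term = "\<lambda>i. if snd ?ww ! i = r then bas (subst_at s ?ww i) else (0 :: ('v,'e,'k) pelt)"
  have left: "pmult h (subst_arrow_bas r s w) (bas w') = (\<Sum>i<length (snd w). ?term i)"
    unfolding subst_arrow_bas_def pmult_sum_left
  proof (rule sum.cong)
    fix i assume i: "i \<in> {..<length (snd w)}"
    then show "pmult h (if snd w ! i = r then bas (subst_at s w i) else 0) (bas w') = ?term i"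
      using True pend_subst_at[OF assms, of i w]
      by (auto simp: pmult_bas pcat_def subst_at_def nth_append)
  qed simp
  have right: "pmult h (bas w) (subst_arrow_bas r s w') = (\<Sum>i<length (snd w'). ?term (length (snd w) + i))"
    unfolding subst_arrow_bas_def pmult_sum_right
    by (rule sum.cong) (use True in \<open>auto simp: pmult_bas pcat_def subst_at_def\<close>)
  have "length (snd ?ww) = length (snd w) + length (snd w')"
    by (simp add: pcat_def)
  then have "subst_arrow r s (pmult h (bas w) (bas w')) = (\<Sum>i<length (snd w) + length (snd w'). ?term i)"
    using True by (simp add: pmult_bas subst_arrow_bas_def)
  also have "\<dots> = pmult h (subst_arrow_bas r s w) (bas w') + pmult h (bas w) (subst_arrow_bas r s w')"
    unfolding left right by (rule sum_lessThan_add)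
  finally show ?thesis .
next
  case False
  have "pend h (subst_at s w i) \<noteq> fst w'" if "i < length (snd w)" "snd w ! i = r" for i
    using pend_subst_at[OF assms that] False by simp
  then have "pmult h (subst_arrow_bas r s w) (bas w') = (0 :: ('v,'e,'k) pelt)"
    unfolding subst_arrow_bas_def pmult_sum_left pmult_if_left pmult_bas
    by (intro sum.neutral) auto
  moreover have "pmult h (bas w) (subst_arrow_bas r s w') = (0 :: ('v,'e,'k) pelt)"
    unfolding subst_arrow_bas_def pmult_sum_right pmult_if_right pmult_bas
    using False by (intro sum.neutral) (simp add: subst_at_def)
  ultimately show ?thesis
    using False by (simp add: pmult_bas subst_arrow_def)
qed

lemma subst_arrow_pmult:
  fixes x y :: "('v,'e,'k::comm_ring_1) pelt"
  assumes "snd s \<noteq> []" "pend h s = h r" "finite (supp x)" "finite (supp y)"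
  shows "subst_arrow r s (pmult h x y) = pmult h (subst_arrow r s x) y + pmult h x (subst_arrow r s y)"
proof -
  let ?X = "supp x" and ?Y = "supp y"
  let ?xy = "\<lambda>w w'. smul (x w * y w')"
  have x_eq: "x = (\<Sum>w\<in>?X. smul (x w) (bas w))" and y_eq: "y = (\<Sum>w\<in>?Y. smul (y w) (bas w))"
    using assms(3,4) by (simp_all add: pelt_expansion)
  have fin: "finite (supp (pmult h (bas w) (bas w') :: ('v,'e,'k) pelt))" for w w'
    by (simp add: pmult_bas supp_bas)
  have "subst_arrow r s (pmult h x y)
      = subst_arrow r s (\<Sum>w\<in>?X. \<Sum>w'\<in>?Y. ?xy w w' (pmult h (bas w) (bas w')))"
    by (subst x_eq, subst y_eq, simp only: pmult_smul_sum)
  also have "\<dots> = (\<Sum>w\<in>?X. \<Sum>w'\<in>?Y. ?xy w w' (pmult h (subst_arrow_bas r s w) (bas w'))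
      + ?xy w w' (pmult h (bas w) (subst_arrow_bas r s w')))"
    by (simp add: subst_arrow_sum finite_supp_sum finite_supp_smul fin subst_arrow_smul[OF fin]
        subst_arrow_pmult_bas[OF assms(1,2)] smul_add)
  also have "\<dots> = pmult h (\<Sum>w\<in>?X. smul (x w) (subst_arrow_bas r s w)) (\<Sum>w\<in>?Y. smul (y w) (bas w))
      + pmult h (\<Sum>w\<in>?X. smul (x w) (bas w)) (\<Sum>w\<in>?Y. smul (y w) (subst_arrow_bas r s w))"
    by (simp only: pmult_smul_sum sum.distrib)
  also have "\<dots> = pmult h (subst_arrow r s x) y + pmult h x (subst_arrow r s y)"
    using x_eq y_eq by (simp add: subst_arrow_def)
  finally show ?thesis .
qed

lemma is_qpath_subst_at:
  assumes HV: "\<forall>a\<in>E. h a \<in> V" and w: "is_qpath V E t h w" and i: "i < length (snd w)" "snd w ! i = r"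
    and s: "is_qpath V E t h s" "fst s = t r" "pend h s = h r"
  shows "is_qpath V E t h (subst_at s w i)"
proof -
  obtain v l where wv: "w = (v, l)" by (cases w)
  have "l = take i l @ r # drop (Suc i) l"
    using i wv by (metis id_take_nth_drop snd_conv)
  then have "is_qpath V E t h (v, take i l @ r # drop (Suc i) l)"
    using w wv by simp
  then have prefix: "is_qpath V E t h (v, take i l)"
    and tail: "is_qpath V E t h (pend h (v, take i l), r # drop (Suc i) l)"
    by (simp_all only: is_qpath_append[OF HV])
  from tail have "t r = pend h (v, take i l)" "is_qpath V E t h (h r, drop (Suc i) l)"
    by (simp_all add: is_qpath_Cons[OF HV])
  moreover have "is_qpath V E t h (fst s, snd s @ drop (Suc i) l)"
    using s calculation(2) by (metis is_qpath_append[OF HV] prod.collapse)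
  ultimately have "is_qpath V E t h (v, take i l @ snd s @ drop (Suc i) l)"
    using prefix s by (simp add: is_qpath_append[OF HV])
  then show ?thesis using wv by (simp add: subst_at_def)
qed

lemma subst_arrow_in_path_alg:
  fixes x :: "('v,'e,'k::comm_ring_1) pelt"
  assumes HV: "\<forall>a\<in>E. h a \<in> V"
    and s: "is_qpath V E t h s" "fst s = t r" "pend h s = h r"
    and x: "x \<in> path_alg V E t h"
  shows "subst_arrow r s x \<in> path_alg V E t h"
proof -
  have "is_qpath V E t h z" if "subst_arrow r s x z \<noteq> 0" for z
  proof -
    have "(\<Sum>w\<in>supp x. x w * subst_arrow_bas r s w z) \<noteq> 0"
      using that by (simp add: subst_arrow_def sum_fun_apply)
    then obtain w where w: "w \<in> supp x" "x w * subst_arrow_bas r s w z \<noteq> 0"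
      by (meson sum.neutral)
    then have "subst_arrow_bas r s w z \<noteq> (0::'k)"
      by (metis mult_zero_right)
    then have "(\<Sum>i<length (snd w). (if snd w ! i = r then bas (subst_at s w i) else 0) z) \<noteq> (0::'k)"
      by (simp add: subst_arrow_bas_def sum_fun_apply)
    then obtain i where i: "i < length (snd w)" "(if snd w ! i = r then bas (subst_at s w i) else 0) z \<noteq> (0::'k)"
      by (meson lessThan_iff sum.neutral)
    then have i: "i < length (snd w)" "snd w ! i = r" "z = subst_at s w i"
      by (auto simp: bas_apply split: if_splits)
    have "is_qpath V E t h w"
      using x w(1) unfolding path_alg_def supp_def by blast
    then show ?thesis
      using is_qpath_subst_at[OF HV _ i(1,2) s] i(3) by simp
  qed
  moreover have "finite (supp (subst_arrow r s x))"
    unfolding subst_arrow_def by (intro finite_supp_sum finite_supp_smul finite_supp_subst_arrow_bas)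
  ultimately show ?thesis
    by (auto simp: path_alg_def supp_def)
qed

definition is_arrow_diffop :: "'v set \<Rightarrow> 'e set \<Rightarrow> ('e \<Rightarrow> 'v) \<Rightarrow> ('e \<Rightarrow> 'v) \<Rightarrow> ('v,'e,'k::comm_ring_1) pelt set
    \<Rightarrow> 'e \<Rightarrow> ('v,'e) qpath \<Rightarrow> (('v,'e,'k) pelt \<Rightarrow> ('v,'e,'k) pelt) \<Rightarrow> bool" where
  "is_arrow_diffop V E t h I r s D \<longleftrightarrow> is_diffop V E t h I D \<and>
      congI I (D (bas (t r, [r]))) (bas s) \<and>
      (\<forall>a\<in>E. a \<noteq> r \<longrightarrow> congI I (D (bas (t a, [a]))) (\<lambda>_. 0)) \<and>
      (\<forall>v\<in>V. congI I (D (bas (v, []))) (\<lambda>_. 0))"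

lemma congI_eq: "is_ideal V E t h I \<Longrightarrow> x = y \<Longrightarrow> congI I x y"
  by (simp add: congI_def is_ideal_def)

lemma is_arrow_diffop_subst_arrow:
  fixes I :: "('v,'e,'k::comm_ring_1) pelt set"
  assumes HV: "\<forall>a\<in>E. h a \<in> V" and I: "is_ideal V E t h I"
    and s: "is_qpath V E t h s" "fst s = t r" "pend h s = h r" "snd s \<noteq> []"
  shows "is_arrow_diffop V E t h I r s (subst_arrow r s)"
  unfolding is_arrow_diffop_def is_diffop_def
proof (intro conjI ballI allI impI congI_eq[OF I])
  fix x :: "('v,'e,'k) pelt" assume "x \<in> path_alg V E t h"
  then show "subst_arrow r s x \<in> path_alg V E t h"
    by (rule subst_arrow_in_path_alg[OF HV s(1-3)])
next
  fix x y :: "('v,'e,'k) pelt" assume "x \<in> path_alg V E t h" "y \<in> path_alg V E t h"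
  then have fin: "finite (supp x)" "finite (supp y)"
    by (simp_all add: finite_supp_path_alg)
  show "subst_arrow r s (\<lambda>p. x p + y p) = (\<lambda>p. subst_arrow r s x p + subst_arrow r s y p)"
    using subst_arrow_add[OF fin] by (simp add: plus_fun_def)
  show "subst_arrow r s (pmult h x y) = (\<lambda>p. pmult h (subst_arrow r s x) y p + pmult h x (subst_arrow r s y) p)"
    using subst_arrow_pmult[OF s(4,3) fin] by (simp add: plus_fun_def)
next
  fix c and x :: "('v,'e,'k) pelt" assume "x \<in> path_alg V E t h"
  then show "subst_arrow r s (smul c x) = smul c (subst_arrow r s x)"
    by (simp add: subst_arrow_smul finite_supp_path_alg)
next
  show "subst_arrow r s (bas (t r, [r])) = bas s"
    using s(2) by (cases s) (simp add: subst_arrow_bas_def subst_at_def)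
next
  fix a assume "a \<noteq> r"
  then show "subst_arrow r s (bas (t a, [a])) = (\<lambda>_. 0)"
    by (simp add: subst_arrow_bas_def zero_fun_def[symmetric])
next
  fix v
  show "subst_arrow r s (bas (v, [])) = (\<lambda>_. 0)"
    by (simp add: subst_arrow_bas_def zero_fun_def)
qed

lemma is_arrow_diffop_Drs:
  fixes I :: "('v,'e,'k::comm_ring_1) pelt set"
  assumes "\<forall>a\<in>E. h a \<in> V" "is_ideal V E t h I"
    and "is_qpath V E t h s" "fst s = t r" "pend h s = h r" "snd s \<noteq> []"
  shows "is_arrow_diffop V E t h I r s (Drs V E t h I r s)"
proof -
  have "Drs V E t h I r s = (SOME D. is_arrow_diffop V E t h I r s D)"
    by (simp add: Drs_def is_arrow_diffop_def)
  then show ?thesis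
    using someI[where P = "is_arrow_diffop V E t h I r s", OF is_arrow_diffop_subst_arrow[OF assms]]
    by simp
qed

section \<open>Weak differential operators\<close>

lemma congI_iff: "congI I u v \<longleftrightarrow> u - v \<in> I"
  by (simp add: congI_def fun_diff_def)

text \<open>Unlike is_diffop, this notion
  is closed under sums and differences, and it already forces an operator vanishing on the
  generators to vanish everywhere.\<close>

definition weak_diffop :: "'v set \<Rightarrow> 'e set \<Rightarrow> ('e \<Rightarrow> 'v) \<Rightarrow> ('e \<Rightarrow> 'v) \<Rightarrow> ('v,'e,'k::comm_ring_1) pelt set
    \<Rightarrow> (('v,'e,'k) pelt \<Rightarrow> ('v,'e,'k) pelt) \<Rightarrow> bool" where
  "weak_diffop V E t h I D \<longleftrightarrow>
     (\<forall>x\<in>path_alg V E t h. \<forall>y\<in>path_alg V E t h. D (x + y) - (D x + D y) \<in> I) \<and>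
     (\<forall>c. \<forall>x\<in>path_alg V E t h. D (smul c x) - smul c (D x) \<in> I) \<and>
     (\<forall>p a. is_qpath V E t h p \<longrightarrow> a \<in> E \<longrightarrow>
        D (pmult h (bas p) (bas (t a, [a])))
          - (pmult h (D (bas p)) (bas (t a, [a])) + pmult h (bas p) (D (bas (t a, [a])))) \<in> I)"

context
  fixes V :: "'v set" and E :: "'e set" and t h :: "'e \<Rightarrow> 'v"
    and I :: "('v,'e,'k::comm_ring_1) pelt set"
  assumes I: "is_ideal V E t h I"
begin

lemma ideal_zero: "0 \<in> I"
  using I by (simp add: is_ideal_def zero_fun_def)

lemma ideal_add: "x \<in> I \<Longrightarrow> y \<in> I \<Longrightarrow> x + y \<in> I"
  using I by (simp add: is_ideal_def plus_fun_def)

lemma ideal_smul: "x \<in> I \<Longrightarrow> smul c x \<in> I"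
  using I by (simp add: is_ideal_def)

lemma ideal_diff: "x \<in> I \<Longrightarrow> y \<in> I \<Longrightarrow> x - y \<in> I"
  using ideal_add[of x "smul (-1) y"] ideal_smul[of y "-1"] by (simp add: fun_diff_def plus_fun_def)

lemma ideal_sum: "(\<And>j. j \<in> J \<Longrightarrow> f j \<in> I) \<Longrightarrow> (\<Sum>j\<in>J. f j) \<in> I"
proof (induction J rule: infinite_finite_induct)
  case (insert x F)
  then have "f x + sum f F \<in> I"
    by (intro ideal_add) auto
  then show ?case by (simp only: sum.insert[OF insert(1,2)])
qed (simp_all add: ideal_zero)

lemma ideal_pmult_left: "a \<in> path_alg V E t h \<Longrightarrow> x \<in> I \<Longrightarrow> pmult h a x \<in> I"
  using I by (simp add: is_ideal_def)

lemma ideal_pmult_right: "a \<in> path_alg V E t h \<Longrightarrow> x \<in> I \<Longrightarrow> pmult h x a \<in> I"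
  using I by (simp add: is_ideal_def)

lemma is_diffop_weak_diffop:
  assumes HV: "\<forall>a\<in>E. t a \<in> V" and D: "is_diffop V E t h I D"
  shows "weak_diffop V E t h I D"
  unfolding weak_diffop_def
proof (intro conjI ballI allI impI)
  fix x y :: "('v,'e,'k) pelt" assume "x \<in> path_alg V E t h" "y \<in> path_alg V E t h"
  then show "D (x + y) - (D x + D y) \<in> I"
    using D unfolding is_diffop_def congI_iff by (simp add: plus_fun_def)
next
  fix c and x :: "('v,'e,'k) pelt" assume "x \<in> path_alg V E t h"
  then show "D (smul c x) - smul c (D x) \<in> I"
    using D unfolding is_diffop_def congI_iff by simp
next
  fix p a assume "is_qpath V E t h p" "a \<in> E"
  then have "(bas p :: ('v,'e,'k) pelt) \<in> path_alg V E t h" "(bas (t a, [a]) :: ('v,'e,'k) pelt) \<in> path_alg V E t h"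
    using HV by (simp_all add: bas_in_path_alg is_qpath_arrow)
  then show "D (pmult h (bas p) (bas (t a, [a])))
      - (pmult h (D (bas p)) (bas (t a, [a])) + pmult h (bas p) (D (bas (t a, [a])))) \<in> I"
    using D unfolding is_diffop_def congI_iff by (simp add: plus_fun_def)
qed

lemma weak_diffop_add:
  assumes "weak_diffop V E t h I D1" "weak_diffop V E t h I D2"
  shows "weak_diffop V E t h I (\<lambda>x. D1 x + D2 x)"
  unfolding weak_diffop_def
proof (intro conjI ballI allI impI)
  fix x y :: "('v,'e,'k) pelt" assume "x \<in> path_alg V E t h" "y \<in> path_alg V E t h"
  moreover have "D1 (x + y) + D2 (x + y) - (D1 x + D2 x + (D1 y + D2 y)) =
      (D1 (x + y) - (D1 x + D1 y)) + (D2 (x + y) - (D2 x + D2 y))"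
    by (simp add: algebra_simps)
  ultimately show "D1 (x + y) + D2 (x + y) - (D1 x + D2 x + (D1 y + D2 y)) \<in> I"
    using assms unfolding weak_diffop_def by (metis ideal_add)
next
  fix c and x :: "('v,'e,'k) pelt" assume "x \<in> path_alg V E t h"
  moreover have "D1 (smul c x) + D2 (smul c x) - smul c (D1 x + D2 x) =
      (D1 (smul c x) - smul c (D1 x)) + (D2 (smul c x) - smul c (D2 x))"
    by (simp add: smul_add algebra_simps)
  ultimately show "D1 (smul c x) + D2 (smul c x) - smul c (D1 x + D2 x) \<in> I"
    using assms unfolding weak_diffop_def by (metis ideal_add)
next
  fix p a assume "is_qpath V E t h p" "a \<in> E"
  moreover let ?P = "bas p" and ?A = "bas (t a, [a])"
  have "D1 (pmult h ?P ?A) + D2 (pmult h ?P ?A) - (pmult h (D1 ?P + D2 ?P) ?A + pmult h ?P (D1 ?A + D2 ?A)) =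
      (D1 (pmult h ?P ?A) - (pmult h (D1 ?P) ?A + pmult h ?P (D1 ?A))) +
      (D2 (pmult h ?P ?A) - (pmult h (D2 ?P) ?A + pmult h ?P (D2 ?A)))"
    by (simp add: pmult_add_left pmult_add_right algebra_simps)
  ultimately show "D1 (pmult h ?P ?A) + D2 (pmult h ?P ?A)
      - (pmult h (D1 ?P + D2 ?P) ?A + pmult h ?P (D1 ?A + D2 ?A)) \<in> I"
    using assms unfolding weak_diffop_def by (metis ideal_add)
qed

lemma weak_diffop_diff:
  assumes "weak_diffop V E t h I D1" "weak_diffop V E t h I D2"
  shows "weak_diffop V E t h I (\<lambda>x. D1 x - D2 x)"
  unfolding weak_diffop_def
proof (intro conjI ballI allI impI)
  fix x y :: "('v,'e,'k) pelt" assume "x \<in> path_alg V E t h" "y \<in> path_alg V E t h"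
  moreover have "D1 (x + y) - D2 (x + y) - (D1 x - D2 x + (D1 y - D2 y)) =
      (D1 (x + y) - (D1 x + D1 y)) - (D2 (x + y) - (D2 x + D2 y))"
    by (simp add: algebra_simps)
  ultimately show "D1 (x + y) - D2 (x + y) - (D1 x - D2 x + (D1 y - D2 y)) \<in> I"
    using assms unfolding weak_diffop_def by (metis ideal_diff)
next
  fix c and x :: "('v,'e,'k) pelt" assume "x \<in> path_alg V E t h"
  moreover have "D1 (smul c x) - D2 (smul c x) - smul c (D1 x - D2 x) =
      (D1 (smul c x) - smul c (D1 x)) - (D2 (smul c x) - smul c (D2 x))"
    by (simp add: smul_diff algebra_simps)
  ultimately show "D1 (smul c x) - D2 (smul c x) - smul c (D1 x - D2 x) \<in> I"
    using assms unfolding weak_diffop_def by (metis ideal_diff)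
next
  fix p a assume "is_qpath V E t h p" "a \<in> E"
  moreover let ?P = "bas p" and ?A = "bas (t a, [a])"
  have "D1 (pmult h ?P ?A) - D2 (pmult h ?P ?A) - (pmult h (D1 ?P - D2 ?P) ?A + pmult h ?P (D1 ?A - D2 ?A)) =
      (D1 (pmult h ?P ?A) - (pmult h (D1 ?P) ?A + pmult h ?P (D1 ?A))) -
      (D2 (pmult h ?P ?A) - (pmult h (D2 ?P) ?A + pmult h ?P (D2 ?A)))"
    by (simp add: pmult_diff_left pmult_diff_right algebra_simps)
  ultimately show "D1 (pmult h ?P ?A) - D2 (pmult h ?P ?A)
      - (pmult h (D1 ?P - D2 ?P) ?A + pmult h ?P (D1 ?A - D2 ?A)) \<in> I"
    using assms unfolding weak_diffop_def by (metis ideal_diff)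
qed

lemma weak_diffop_sum:
  assumes "\<And>j. j \<in> J \<Longrightarrow> weak_diffop V E t h I (D j)"
  shows "weak_diffop V E t h I (\<lambda>x. \<Sum>j\<in>J. D j x)"
  using assms
proof (induction J rule: infinite_finite_induct)
  case (insert j F)
  then have "weak_diffop V E t h I (\<lambda>x. D j x + (\<Sum>j\<in>F. D j x))"
    by (intro weak_diffop_add) auto
  then show ?case
    by (simp only: sum.insert[OF insert(1,2)])
qed (simp_all add: weak_diffop_def ideal_zero)

lemma weak_diffop_vanishes_on_paths:
  assumes HV: "\<forall>a\<in>E. t a \<in> V \<and> h a \<in> V" and D: "weak_diffop V E t h I D"
    and arrows: "\<forall>a\<in>E. D (bas (t a, [a])) \<in> I" and vertices: "\<forall>v\<in>V. D (bas (v, [])) \<in> I"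
  shows "is_qpath V E t h (v, l) \<Longrightarrow> D (bas (v, l)) \<in> I"
proof (induction l rule: rev_induct)
  case Nil
  then show ?case using vertices by (simp add: is_qpath_def)
next
  case (snoc a l)
  have HV': "\<forall>a\<in>E. h a \<in> V" using HV by blast
  from snoc.prems have l: "is_qpath V E t h (v, l)" and "is_qpath V E t h (pend h (v, l), [a])"
    by (simp_all only: is_qpath_append[OF HV'])
  then have a: "a \<in> E" "t a = pend h (v, l)"
    by (simp_all add: is_qpath_Cons[OF HV'])
  let ?X = "pmult h (D (bas (v, l))) (bas (t a, [a]))"
  let ?Y = "pmult h (bas (v, l)) (D (bas (t a, [a])))"
  have "(bas (v, l @ [a]) :: ('v,'e,'k) pelt) = pmult h (bas (v, l)) (bas (t a, [a]))"
    using a by (simp add: pmult_bas pcat_def)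
  then have "D (bas (v, l @ [a])) - (?X + ?Y) \<in> I"
    using D l a(1) unfolding weak_diffop_def by simp
  moreover have "?X \<in> I"
    using HV a(1) snoc.IH[OF l] by (intro ideal_pmult_right bas_in_path_alg is_qpath_arrow) auto
  moreover have "?Y \<in> I"
    using arrows a(1) by (intro ideal_pmult_left bas_in_path_alg l) auto
  ultimately show ?case
    by (metis ideal_add diff_add_cancel)
qed

lemma weak_diffop_zero:
  assumes "weak_diffop V E t h I D"
  shows "D 0 \<in> I"
proof -
  have "0 \<in> path_alg V E t h"
    by (simp add: path_alg_def)
  then have "D (0 + 0) - (D 0 + D 0) \<in> I"
    using assms unfolding weak_diffop_def by blast
  moreover have "D 0 = 0 - (D (0 + 0) - (D 0 + D 0))"
    by simp
  ultimately show ?thesis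
    using ideal_diff[OF ideal_zero] by metis
qed

lemma weak_diffop_add_monomial:
  assumes HV: "\<forall>a\<in>E. t a \<in> V \<and> h a \<in> V" and D: "weak_diffop V E t h I D"
    and arrows: "\<forall>a\<in>E. D (bas (t a, [a])) \<in> I" and vertices: "\<forall>v\<in>V. D (bas (v, [])) \<in> I"
    and x: "x \<in> path_alg V E t h" "D x \<in> I" and w: "is_qpath V E t h w"
  shows "D (x + smul c (bas w)) \<in> I"
proof -
  let ?w = "smul c (bas w)"
  have "D ?w - smul c (D (bas w)) \<in> I"
    using D bas_in_path_alg[OF w] unfolding weak_diffop_def by blast
  moreover have "smul c (D (bas w)) \<in> I"
    using weak_diffop_vanishes_on_paths[OF HV D arrows vertices, of "fst w" "snd w"] w
    by (intro ideal_smul) simp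
  ultimately have "D ?w - smul c (D (bas w)) + smul c (D (bas w)) \<in> I"
    by (rule ideal_add)
  then have Dw: "D ?w \<in> I"
    by (simp only: diff_add_cancel)
  have "D (x + ?w) - (D x + D ?w) \<in> I"
    using D x(1) smul_in_path_alg[OF bas_in_path_alg[OF w]] unfolding weak_diffop_def by blast
  then have "D (x + ?w) - (D x + D ?w) + (D x + D ?w) \<in> I"
    using x(2) Dw by (intro ideal_add)
  then show ?thesis
    by (simp only: diff_add_cancel)
qed

lemma weak_diffop_vanishes:
  assumes HV: "\<forall>a\<in>E. t a \<in> V \<and> h a \<in> V" and D: "weak_diffop V E t h I D"
    and arrows: "\<forall>a\<in>E. D (bas (t a, [a])) \<in> I" and vertices: "\<forall>v\<in>V. D (bas (v, [])) \<in> I"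
    and x: "x \<in> path_alg V E t h"
  shows "D x \<in> I"
proof -
  have "x \<in> path_alg V E t h \<Longrightarrow> supp x = F \<Longrightarrow> D x \<in> I" if "finite F" for x F
    using that
  proof (induction F arbitrary: x rule: finite_induct)
    case empty
    then have "x = 0"
      by (auto simp: supp_def)
    then show ?case
      using weak_diffop_zero[OF D] by (simp only:)
  next
    case (insert w F)
    let ?x' = "x(w := 0)"
    have "supp ?x' = F"
      using insert.prems(2) insert.hyps(2) by (auto simp: supp_def)
    moreover from this have x': "?x' \<in> path_alg V E t h"
      using insert.prems(1) insert.hyps(1) unfolding path_alg_def supp_def by auto
    ultimately have "D ?x' \<in> I"
      by (intro insert.IH)
    moreover have "x w \<noteq> 0"
      using insert.prems by (auto simp: supp_def)
    then have "is_qpath V E t h w"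
      using insert.prems unfolding path_alg_def by blast
    ultimately have "D (?x' + smul (x w) (bas w)) \<in> I"
      using weak_diffop_add_monomial[OF HV D arrows vertices x'] by blast
    moreover have "?x' + smul (x w) (bas w) = x"
      by (rule ext) (simp add: bas_apply)
    ultimately show ?case
      by (simp only:)
  qed
  from this[OF finite_supp_path_alg[OF x] x refl] show ?thesis .
qed

lemma weak_diffop_agree:
  assumes HV: "\<forall>a\<in>E. t a \<in> V \<and> h a \<in> V"
    and D1: "weak_diffop V E t h I D1" and D2: "weak_diffop V E t h I D2"
    and "\<forall>a\<in>E. D1 (bas (t a, [a])) - D2 (bas (t a, [a])) \<in> I"
    and "\<forall>v\<in>V. D1 (bas (v, [])) - D2 (bas (v, [])) \<in> I"
    and "x \<in> path_alg V E t h"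
  shows "D1 x - D2 x \<in> I"
  using weak_diffop_vanishes[OF HV weak_diffop_diff[OF D1 D2]] assms(4-6) by blast

end

section \<open>Inner derivations and the arrow derivations\<close>

lemma Dm_eq: "Dm h m x = pmult h m x - pmult h x m"
  by (simp add: Dm_def fun_diff_def)

lemma Dm_bas_arrow:
  "Dm h (bas q) (bas (t b, [b])) = (if t b = pend h q then bas (pcat q (t b, [b])) else 0)
     - (if h b = fst q then bas (pcat (t b, [b]) q) else (0 :: ('v,'e,'k::comm_ring_1) pelt))"
  by (auto simp: Dm_eq pmult_bas pend_def)

lemma Dm_bas_vertex:
  assumes "fst q = pend h q"
  shows "Dm h (bas q) (bas (v, [])) = (0 :: ('v,'e,'k::comm_ring_1) pelt)"
proof -
  have "pcat q (v, []) = q" "fst q = v \<Longrightarrow> pcat (v, []) q = q"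
    by (auto simp: pcat_def)
  with assms show ?thesis
    by (auto simp: Dm_eq pmult_bas pend_def)
qed

lemma weak_diffop_Dm:
  fixes I :: "('v,'e,'k::comm_ring_1) pelt set"
  assumes "is_ideal V E t h I"
  shows "weak_diffop V E t h I (Dm h (bas q))"
  unfolding weak_diffop_def
proof (intro conjI ballI allI impI)
  fix x y :: "('v,'e,'k) pelt"
  have "Dm h (bas q) (x + y) - (Dm h (bas q) x + Dm h (bas q) y) = 0"
    by (simp add: Dm_eq pmult_add_left pmult_add_right algebra_simps)
  then show "Dm h (bas q) (x + y) - (Dm h (bas q) x + Dm h (bas q) y) \<in> I"
    using ideal_zero[OF assms] by simp
next
  fix c and x :: "('v,'e,'k) pelt"
  have "Dm h (bas q) (smul c x) - smul c (Dm h (bas q) x) = 0"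
    by (simp add: Dm_eq pmult_smul_left pmult_smul_right smul_diff)
  then show "Dm h (bas q) (smul c x) - smul c (Dm h (bas q) x) \<in> I"
    using ideal_zero[OF assms] by simp
next
  fix p a
  let ?M = "bas q :: ('v,'e,'k) pelt" and ?P = "bas p :: ('v,'e,'k) pelt" and ?A = "bas (t a, [a]) :: ('v,'e,'k) pelt"
  have "Dm h ?M (pmult h ?P ?A) - (pmult h (Dm h ?M ?P) ?A + pmult h ?P (Dm h ?M ?A)) = 0"
    by (simp add: Dm_eq pmult_diff_left pmult_diff_right pmult_bas_assoc)
  then show "Dm h ?M (pmult h ?P ?A) - (pmult h (Dm h ?M ?P) ?A + pmult h ?P (Dm h ?M ?A)) \<in> I"
    using ideal_zero[OF assms] by simp
qed

lemma is_arrow_diffop_Drs_append: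
  fixes I :: "('v,'e,'k::comm_ring_1) pelt set"
  assumes HV: "\<forall>a\<in>E. t a \<in> V \<and> h a \<in> V" and I: "is_ideal V E t h I"
    and q: "is_qpath V E t h q" "fst q = pend h q" and a: "a \<in> E" "t a = pend h q"
  shows "is_arrow_diffop V E t h I a (pcat q (t a, [a])) (Drs V E t h I a (pcat q (t a, [a])))"
proof (rule is_arrow_diffop_Drs)
  show "is_qpath V E t h (pcat q (t a, [a]))"
    using HV q a by (intro is_qpath_pcat is_qpath_arrow) auto
qed (use HV I q a in \<open>auto simp: pcat_def pend_def\<close>)

lemma is_arrow_diffop_Drs_prepend:
  fixes I :: "('v,'e,'k::comm_ring_1) pelt set"
  assumes HV: "\<forall>a\<in>E. t a \<in> V \<and> h a \<in> V" and I: "is_ideal V E t h I"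
    and q: "is_qpath V E t h q" "fst q = pend h q" and r: "r \<in> E" "h r = fst q"
  shows "is_arrow_diffop V E t h I r (pcat (t r, [r]) q) (Drs V E t h I r (pcat (t r, [r]) q))"
proof (rule is_arrow_diffop_Drs)
  show "is_qpath V E t h (pcat (t r, [r]) q)"
    using HV q r by (intro is_qpath_pcat is_qpath_arrow) (auto simp: pend_def)
  have "pend h (t r, [r]) = fst q"
    using r by (simp add: pend_def)
  then show "pend h (pcat (t r, [r]) q) = h r"
    using q r by (simp add: pend_pcat)
qed (use HV I r in \<open>auto simp: pcat_def\<close>)

lemma sum_arrow_diffops_on_arrow:
  fixes I :: "('v,'e,'k::comm_ring_1) pelt set"
  assumes I: "is_ideal V E t h I" and "finite A"
    and D: "\<And>a. a \<in> A \<Longrightarrow> is_arrow_diffop V E t h I a (s a) (D a)" and b: "b \<in> E"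
  shows "(\<Sum>a\<in>A. D a (bas (t b, [b]))) - (if b \<in> A then bas (s b) else 0) \<in> I"
proof -
  have "D a (bas (t b, [b])) - (if b = a then bas (s a) else 0) \<in> I" if "a \<in> A" for a
    using D[OF that] b unfolding is_arrow_diffop_def congI_iff by (auto simp: fun_diff_def zero_fun_def)
  then have "(\<Sum>a\<in>A. D a (bas (t b, [b])) - (if b = a then bas (s a) else 0)) \<in> I"
    by (rule ideal_sum[OF I])
  then show ?thesis
    using \<open>finite A\<close> by (simp add: sum_subtractf)
qed

lemma sum_arrow_diffops_on_vertex:
  fixes I :: "('v,'e,'k::comm_ring_1) pelt set"
  assumes I: "is_ideal V E t h I"
    and D: "\<And>a. a \<in> A \<Longrightarrow> is_arrow_diffop V E t h I a (s a) (D a)" and v: "v \<in> V"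
  shows "(\<Sum>a\<in>A. D a (bas (v, []))) \<in> I"
  using D v by (intro ideal_sum[OF I]) (auto simp: is_arrow_diffop_def congI_def)

text \<open>For a loop q at v0 and choices D1 a = D_{a,qa}, D2 r = D_{r,rq}, this is the right-hand side
  of the theorem.\<close>

definition arrow_diffop_sum :: "'e set \<Rightarrow> ('e \<Rightarrow> 'v) \<Rightarrow> ('e \<Rightarrow> 'v) \<Rightarrow> ('v,'e) qpath
    \<Rightarrow> ('e \<Rightarrow> ('v,'e,'k::comm_ring_1) pelt \<Rightarrow> ('v,'e,'k) pelt) \<Rightarrow> ('e \<Rightarrow> ('v,'e,'k) pelt \<Rightarrow> ('v,'e,'k) pelt)
    \<Rightarrow> ('v,'e,'k) pelt \<Rightarrow> ('v,'e,'k) pelt" where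
  "arrow_diffop_sum E t h q D1 D2 x = (\<Sum>a\<in>{a\<in>E. t a = pend h q}. D1 a x) - (\<Sum>r\<in>{r\<in>E. h r = fst q}. D2 r x)"

context
  fixes V :: "'v set" and E :: "'e set" and t h :: "'e \<Rightarrow> 'v"
    and I :: "('v,'e,'k::comm_ring_1) pelt set" and q :: "('v,'e) qpath"
    and D1 D2 :: "'e \<Rightarrow> ('v,'e,'k) pelt \<Rightarrow> ('v,'e,'k) pelt"
  assumes HV: "\<forall>a\<in>E. t a \<in> V \<and> h a \<in> V" and I: "is_ideal V E t h I" and "finite E"
    and loop: "fst q = pend h q"
    and D1: "\<And>a. a \<in> E \<Longrightarrow> t a = pend h q \<Longrightarrow> is_arrow_diffop V E t h I a (pcat q (t a, [a])) (D1 a)"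
    and D2: "\<And>r. r \<in> E \<Longrightarrow> h r = fst q \<Longrightarrow> is_arrow_diffop V E t h I r (pcat (t r, [r]) q) (D2 r)"
begin

lemma weak_diffop_arrow_diffop_sum: "weak_diffop V E t h I (arrow_diffop_sum E t h q D1 D2)"
proof -
  have "weak_diffop V E t h I (\<lambda>x. (\<Sum>a\<in>{a\<in>E. t a = pend h q}. D1 a x) - (\<Sum>r\<in>{r\<in>E. h r = fst q}. D2 r x))"
    using D1 D2 HV by (intro weak_diffop_diff[OF I] weak_diffop_sum[OF I] is_diffop_weak_diffop[OF I])
      (auto simp: is_arrow_diffop_def)
  then show ?thesis
    by (simp add: arrow_diffop_sum_def[abs_def])
qed

lemma Dm_minus_arrow_diffop_sum_on_arrow:
  assumes b: "b \<in> E"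
  shows "Dm h (bas q) (bas (t b, [b])) - arrow_diffop_sum E t h q D1 D2 (bas (t b, [b])) \<in> I"
proof -
  let ?A1 = "{a\<in>E. t a = pend h q}" and ?A2 = "{r\<in>E. h r = fst q}"
  let ?Y1 = "if b \<in> ?A1 then bas (pcat q (t b, [b])) else 0"
  let ?Y2 = "if b \<in> ?A2 then bas (pcat (t b, [b]) q) else 0"
  have "finite ?A1" "finite ?A2"
    using \<open>finite E\<close> by simp_all
  then have sums: "(\<Sum>r\<in>?A2. D2 r (bas (t b, [b]))) - ?Y2 - ((\<Sum>a\<in>?A1. D1 a (bas (t b, [b]))) - ?Y1) \<in> I"
    using D1 D2 b by (intro ideal_diff[OF I] sum_arrow_diffops_on_arrow[OF I]) auto
  have rearrange: "d - (s1 - s2) = (s2 - y2) - (s1 - y1)"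
    if "d = y1 - y2" for d s1 s2 y1 y2 :: "('v,'e,'k) pelt"
    using that by (simp add: algebra_simps)
  have Dm_arrow: "Dm h (bas q) (bas (t b, [b])) = ?Y1 - ?Y2"
    using b by (simp add: Dm_bas_arrow)
  from sums show ?thesis
    unfolding arrow_diffop_sum_def rearrange[OF Dm_arrow] .
qed

lemma Dm_minus_arrow_diffop_sum_on_vertex:
  assumes "v \<in> V"
  shows "Dm h (bas q) (bas (v, [])) - arrow_diffop_sum E t h q D1 D2 (bas (v, [])) \<in> I"
proof -
  have "0 - arrow_diffop_sum E t h q D1 D2 (bas (v, [])) \<in> I"
    unfolding arrow_diffop_sum_def using D1 D2 assms
    by (intro ideal_diff[OF I] ideal_zero[OF I] sum_arrow_diffops_on_vertex[OF I]) auto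
  then show ?thesis
    using loop by (simp add: Dm_bas_vertex)
qed

lemma Dm_congruent_arrow_diffop_sum:
  "x \<in> path_alg V E t h \<Longrightarrow> Dm h (bas q) x - arrow_diffop_sum E t h q D1 D2 x \<in> I"
  by (rule weak_diffop_agree[OF I HV weak_diffop_Dm[OF I] weak_diffop_arrow_diffop_sum])
    (simp_all add: Dm_minus_arrow_diffop_sum_on_arrow Dm_minus_arrow_diffop_sum_on_vertex)

end

theorem proposition3p1:
  fixes V :: "'v set" and E :: "'e set" and t h :: "'e \<Rightarrow> 'v"
    and I :: "('v, 'e, 'k::field) pelt set" and q :: "('v, 'e) qpath" and v0 :: 'v
  assumes "finite V" and "finite E"
    and "\<forall>a\<in>E. t a \<in> V \<and> h a \<in> V"
    and "quiver_connected V E t h"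
    and "is_ideal V E t h I"
    and "I \<subseteq> arrow_ideal_sq V E t h"
    and "is_qpath V E t h q" and "fst q = v0" and "pend h q = v0"
  shows "\<forall>x\<in>path_alg V E t h.
    congI I (Dm h (bas q) x)
      (\<lambda>p. (\<Sum>a\<in>{a\<in>E. t a = v0}. Drs V E t h I a (pcat q (t a, [a])) x p)
         - (\<Sum>r\<in>{r\<in>E. h r = v0}. Drs V E t h I r (pcat (t r, [r]) q) x p))"
proof
  fix x :: "('v,'e,'k) pelt" assume x: "x \<in> path_alg V E t h"
  let ?D1 = "\<lambda>a. Drs V E t h I a (pcat q (t a, [a]))" and ?D2 = "\<lambda>r. Drs V E t h I r (pcat (t r, [r]) q)"
  have "Dm h (bas q) x - arrow_diffop_sum E t h q ?D1 ?D2 x \<in> I"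
  proof (rule Dm_congruent_arrow_diffop_sum[OF assms(3,5,2)])
    show "is_arrow_diffop V E t h I a (pcat q (t a, [a])) (?D1 a)" if "a \<in> E" "t a = pend h q" for a
      using assms that by (intro is_arrow_diffop_Drs_append) auto
    show "is_arrow_diffop V E t h I r (pcat (t r, [r]) q) (?D2 r)" if "r \<in> E" "h r = fst q" for r
      using assms that by (intro is_arrow_diffop_Drs_prepend) auto
  qed (use assms x in auto)
  then show "congI I (Dm h (bas q) x)
      (\<lambda>p. (\<Sum>a\<in>{a\<in>E. t a = v0}. ?D1 a x p) - (\<Sum>r\<in>{r\<in>E. h r = v0}. ?D2 r x p))"
    using assms(8,9) by (simp add: arrow_diffop_sum_def congI_iff fun_diff_def sum_fun_apply)
qed

end
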